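(* Let $R=[0,1]^2$, $s\in\mathbb{N}$ and $u=2^{-s}$. If $u\le\frac12$, then the $4$-dimensional volume of the union $\mathcal{B}_{close}$ of all close box pairs satisfies $\mathrm{vol}(\mathcal{B}_{close})\le4\pi u$.
   Context: For $p,q\in\mathbb{R}^2$ write $p\le q$ if both coordinates satisfy $\le$. $R$ is split into $2^s\times2^s$ congruent closed squares ("boxes") of side length $u$. A box pair is an ordered pair $(B_1,B_2)$ of boxes, viewed as the subset $B_1\times B_2\subset\mathbb{R}^4$; let $c_1,c_2$ be the centers of $B_1,B_2$. A box pair is close if $c_1\le c_2$ and $\|c_1-c_2\|_2<\sqrt u$. $\mathrm{vol}$ denotes $4$-dimensional Lebesgue measure. *)

theory Defs
  imports "HOL-Analysis.Analysis"
begin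

text \<open>Points of the plane are pairs of reals; the product norm on real \<times> real is Euclidean.
  Points of R^4 are pairs of points of the plane, with Lebesgue (Borel) measure lborel.\<close>

definition side :: "nat \<Rightarrow> real" where
  "side s = 1 / 2 ^ s"

definition box_sq :: "nat \<Rightarrow> nat \<Rightarrow> nat \<Rightarrow> (real \<times> real) set" where
  "box_sq s i j = {p. real i * side s \<le> fst p \<and> fst p \<le> (real i + 1) * side s \<and>
                      real j * side s \<le> snd p \<and> snd p \<le> (real j + 1) * side s}"

definition box_center :: "nat \<Rightarrow> nat \<Rightarrow> nat \<Rightarrow> real \<times> real" where
  "box_center s i j = ((real i + 1/2) * side s, (real j + 1/2) * side s)"

definition pt_le :: "real \<times> real \<Rightarrow> real \<times> real \<Rightarrow> bool" where
  "pt_le p q \<longleftrightarrow> fst p \<le> fst q \<and> snd p \<le> snd q"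

definition close_pair :: "nat \<Rightarrow> nat \<times> nat \<Rightarrow> nat \<times> nat \<Rightarrow> bool" where
  "close_pair s b1 b2 \<longleftrightarrow>
     (let c1 = box_center s (fst b1) (snd b1); c2 = box_center s (fst b2) (snd b2)
      in pt_le c1 c2 \<and> norm (c1 - c2) < sqrt (side s))"

definition B_close :: "nat \<Rightarrow> ((real \<times> real) \<times> (real \<times> real)) set" where
  "B_close s = \<Union> {box_sq s (fst b1) (snd b1) \<times> box_sq s (fst b2) (snd b2) | b1 b2.
       fst b1 < 2 ^ s \<and> snd b1 < 2 ^ s \<and> fst b2 < 2 ^ s \<and> snd b2 < 2 ^ s \<and> close_pair s b1 b2}"

end

theory Submission
  imports Defs
begin

text \<open>A close pair (B1, B2) is determined by B1 and the index offset of B2 from B1; since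
  c1 \<le> c2 and |c1 - c2| < sqrt u, both offsets lie in [0, sqrt u / u) = [0, sqrt (2^s)).
  Hence there are at most 4^s \<lceil>sqrt (2^s)\<rceil>^2 \<le> 4 \<cdot> 8^s candidate pairs, each of volume u^4 = 16^-s,
  so vol(B_close) \<le> 4u \<le> 4\<pi>u.\<close>

lemma side_pos: "0 < side s"
  by (simp add: side_def)

lemma box_sq_eq_cbox:
  "box_sq s i j = cbox (real i * side s, real j * side s) ((real i + 1) * side s, (real j + 1) * side s)"
  by (auto simp: box_sq_def cbox_def Basis_prod_def inner_prod_def)

lemma box_sq_in_borel: "box_sq s i j \<in> sets borel"
  by (simp add: box_sq_eq_cbox)

lemma box_sq_Times_in_borel: "box_sq s i j \<times> box_sq s k l \<in> sets borel"
  by (simp add: box_sq_eq_cbox flip: cbox_Pair_eq)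

lemma emeasure_box_sq: "emeasure lborel (box_sq s i j) = ennreal (side s ^ 2)"
  using side_pos[of s]
  by (simp add: box_sq_eq_cbox emeasure_lborel_cbox_eq Basis_prod_def inner_prod_def
      algebra_simps power2_eq_square)

lemma emeasure_lborel_Times:
  fixes A :: "'a::euclidean_space set" and B :: "'b::euclidean_space set"
  assumes "A \<in> sets borel" "B \<in> sets borel"
  shows "emeasure lborel (A \<times> B) = emeasure lborel A * emeasure lborel B"
  using lborel.emeasure_pair_measure_Times[where N = lborel and A = A and B = B] assms
  by (simp add: lborel_prod)

lemma emeasure_box_sq_Times: "emeasure lborel (box_sq s i j \<times> box_sq s k l) = ennreal (side s ^ 4)"
proof -
  have "side s ^ 4 = side s ^ 2 * side s ^ 2"
    by simp
  then show ?thesis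
    using side_pos[of s]
    by (simp add: emeasure_lborel_Times[OF box_sq_in_borel box_sq_in_borel]
        emeasure_box_sq ennreal_mult[symmetric])
qed

lemma sqrt_side_div_side: "sqrt (side s) / side s = sqrt (2 ^ s)"
proof -
  have "sqrt (1 / 2 ^ s) / (1 / 2 ^ s) = (2::real) ^ s / sqrt (2 ^ s)"
    by (simp add: real_sqrt_divide)
  also have "\<dots> = sqrt (2 ^ s)"
    by (rule real_div_sqrt) simp
  finally show ?thesis
    by (simp add: side_def)
qed

lemma grid_offset_lt:
  fixes u r :: real and i i' :: nat
  assumes "0 < u" and "(real i + 1/2) * u \<le> (real i' + 1/2) * u"
    and "\<bar>(real i + 1/2) * u - (real i' + 1/2) * u\<bar> < r"
  shows "i \<le> i'" and "real (i' - i) < r / u"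
proof -
  show le: "i \<le> i'"
    using assms(1,2) by (simp add: mult_le_cancel_right)
  have "real (i' - i) * u < r"
    using assms(3) le by (simp add: of_nat_diff algebra_simps)
  then show "real (i' - i) < r / u"
    using assms(1) by (simp add: field_simps)
qed

lemma close_pair_offsets:
  assumes "close_pair s (i, j) (i', j')"
  defines "m \<equiv> nat \<lceil>sqrt (2 ^ s)\<rceil>"
  shows "i \<le> i'" "j \<le> j'" "i' - i < m" "j' - j < m"
proof -
  let ?c = "box_center s i j" and ?c' = "box_center s i' j'"
  have le: "pt_le ?c ?c'" and dist: "norm (?c - ?c') < sqrt (side s)"
    using assms(1) by (auto simp: close_pair_def Let_def)
  have "\<bar>fst (?c - ?c')\<bar> \<le> norm (?c - ?c')" "\<bar>snd (?c - ?c')\<bar> \<le> norm (?c - ?c')"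
    by (metis norm_fst_le prod.collapse real_norm_def, metis norm_snd_le prod.collapse real_norm_def)
  then have "\<bar>fst ?c - fst ?c'\<bar> < sqrt (side s)" "\<bar>snd ?c - snd ?c'\<bar> < sqrt (side s)"
    using dist by auto
  moreover have "fst ?c \<le> fst ?c'" "snd ?c \<le> snd ?c'"
    using le by (auto simp: pt_le_def)
  ultimately have
    "(real i + 1/2) * side s \<le> (real i' + 1/2) * side s"
    "\<bar>(real i + 1/2) * side s - (real i' + 1/2) * side s\<bar> < sqrt (side s)"
    "(real j + 1/2) * side s \<le> (real j' + 1/2) * side s"
    "\<bar>(real j + 1/2) * side s - (real j' + 1/2) * side s\<bar> < sqrt (side s)"
    by (simp_all add: box_center_def)
  from grid_offset_lt[OF side_pos this(1,2), unfolded sqrt_side_div_side]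
    and grid_offset_lt[OF side_pos this(3,4), unfolded sqrt_side_div_side]
  show "i \<le> i'" "j \<le> j'" "i' - i < m" "j' - j < m"
    unfolding m_def by linarith+
qed

lemma B_close_subset_offsets:
  fixes s :: nat
  defines "m \<equiv> nat \<lceil>sqrt (2 ^ s)\<rceil>"
  shows "B_close s \<subseteq> (\<Union>((i, j), (a, b)) \<in> ({..<2 ^ s} \<times> {..<2 ^ s}) \<times> ({..<m} \<times> {..<m}).
           box_sq s i j \<times> box_sq s (i + a) (j + b))"
proof
  fix x assume "x \<in> B_close s"
  then obtain i j i' j' where ij: "i < 2 ^ s" "j < 2 ^ s" and close: "close_pair s (i, j) (i', j')"
    and x: "x \<in> box_sq s i j \<times> box_sq s i' j'"
    unfolding B_close_def by auto
  note offsets = close_pair_offsets[OF close, folded m_def]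
  show "x \<in> (\<Union>((i, j), (a, b)) \<in> ({..<2 ^ s} \<times> {..<2 ^ s}) \<times> ({..<m} \<times> {..<m}).
           box_sq s i j \<times> box_sq s (i + a) (j + b))"
    using ij offsets x by (intro UN_I[of "((i, j), (i' - i, j' - j))"]) auto
qed

lemma emeasure_UN_le_card_mult:
  assumes "finite I" and "A ` I \<subseteq> sets M" and "\<And>i. i \<in> I \<Longrightarrow> emeasure M (A i) \<le> c"
  shows "emeasure M (\<Union>i\<in>I. A i) \<le> of_nat (card I) * c"
proof -
  have "emeasure M (\<Union>i\<in>I. A i) \<le> (\<Sum>i\<in>I. emeasure M (A i))"
    using emeasure_subadditive_finite assms(1,2) .
  also have "\<dots> \<le> (\<Sum>i\<in>I. c)"
    using assms(3) by (rule sum_mono)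
  finally show ?thesis
    by simp
qed

lemma nat_ceiling_sqrt_squared_le:
  fixes x :: real
  assumes "1 \<le> x"
  shows "real (nat \<lceil>sqrt x\<rceil>) ^ 2 \<le> 4 * x"
proof -
  have "1 \<le> sqrt x"
    using assms by simp
  then have "real (nat \<lceil>sqrt x\<rceil>) \<le> 2 * sqrt x"
    by linarith
  then have "real (nat \<lceil>sqrt x\<rceil>) ^ 2 \<le> (2 * sqrt x) ^ 2"
    by (intro power_mono) auto
  also have "\<dots> = 4 * x"
    using assms by (simp add: power_mult_distrib)
  finally show ?thesis .
qed

theorem lemma4:
  fixes s :: nat
  assumes "side s \<le> 1/2"
  shows "emeasure lborel (B_close s) \<le> ennreal (4 * pi * side s)"
proof -
  define m where "m = nat \<lceil>sqrt (2 ^ s)\<rceil>"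
  define I where "I = ({..<(2::nat) ^ s} \<times> {..<(2::nat) ^ s}) \<times> ({..<m} \<times> {..<m})"
  have "emeasure lborel (B_close s)
      \<le> emeasure lborel (\<Union>((i, j), (a, b)) \<in> I. box_sq s i j \<times> box_sq s (i + a) (j + b))"
    using B_close_subset_offsets[of s]
    by (intro emeasure_mono sets.finite_UN)
      (auto simp: I_def m_def box_sq_Times_in_borel split: prod.split)
  also have "\<dots> \<le> of_nat (card I) * ennreal (side s ^ 4)"
    by (rule emeasure_UN_le_card_mult) (auto simp: I_def box_sq_Times_in_borel emeasure_box_sq_Times)
  also have "\<dots> = ennreal (real (card I) * side s ^ 4)"
    by (simp add: ennreal_of_nat_eq_real_of_nat ennreal_mult')
  also have "\<dots> \<le> ennreal (4 * pi * side s)"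
  proof (intro ennreal_leI)
    have "real (card I) * side s ^ 4 = real m ^ 2 / 2 ^ s * side s"
      by (simp add: I_def side_def field_simps power2_eq_square eval_nat_numeral)
    also have "\<dots> \<le> 4 * side s"
      using nat_ceiling_sqrt_squared_le[of "2 ^ s"] side_pos[of s]
      by (intro mult_right_mono) (auto simp: m_def field_simps)
    also have "\<dots> \<le> 4 * pi * side s"
      using side_pos[of s] pi_gt3 by simp
    finally show "real (card I) * side s ^ 4 \<le> 4 * pi * side s" .
  qed
  finally show ?thesis .
qed

end
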